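(* Let $\mathbb{X}$ be a finite-dimensional real polyhedral Banach space such that for all non-zero $x_1,x_2\in\mathbb{X}$, if the order of smoothness of $x_1$ is strictly greater than that of $x_2$, then $|\mathrm{Ext}\,J(x_1)|>|\mathrm{Ext}\,J(x_2)|$. If a bijective operator $T\in\mathbb{L}(\mathbb{X})$ preserves parallel pairs, then for each non-zero $z\in\mathbb{X}$ the order of smoothness of $Tz$ equals the order of smoothness of $z$.
   Context: A finite-dimensional Banach space is polyhedral if its unit ball has finitely many extreme points. For non-zero $x$, $J(x)=\{f\in S_{\mathbb{X}^*}: f(x)=\|x\|\}$ and $\mathrm{Ext}\,J(x)$ is its set of extreme points. The order of smoothness of non-zero $x$ is $\dim(\mathrm{span}\,J(x))$ ($x$ is $k$-smooth if this equals $k$). $(x,y)$ is a parallel pair if $\|x+\lambda y\|=\|x\|+\|y\|$ for some $\lambda$ with $|\lambda|=1$; $T$ preserves parallel pairs if $(x,y)$ parallel implies $(Tx,Ty)$ parallel. *)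

theory Defs
  imports "HOL-Analysis.Analysis"
begin

text \<open>A finite-dimensional real normed space (automatically Banach).\<close>
definition fin_dim_space :: "'a::real_normed_vector itself \<Rightarrow> bool" where
  "fin_dim_space _ \<longleftrightarrow> (\<exists>B::'a set. finite B \<and> span B = UNIV)"

definition polyhedral :: "'a::real_normed_vector itself \<Rightarrow> bool" where
  "polyhedral _ \<longleftrightarrow> finite {x::'a. x extreme_point_of cball 0 1}"

definition J :: "'a::real_normed_vector \<Rightarrow> ('a \<Rightarrow>\<^sub>L real) set" where
  "J x = {f. norm f = 1 \<and> blinfun_apply f x = norm x}"

definition ExtJ :: "'a::real_normed_vector \<Rightarrow> ('a \<Rightarrow>\<^sub>L real) set" where
  "ExtJ x = {f. f extreme_point_of J x}"

definition smooth_order :: "'a::real_normed_vector \<Rightarrow> nat" where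
  "smooth_order x = dim (span (J x))"

definition parallel :: "'a::real_normed_vector \<Rightarrow> 'a \<Rightarrow> bool" where
  "parallel x y \<longleftrightarrow> (\<exists>c::real. \<bar>c\<bar> = 1 \<and> norm (x + c *\<^sub>R y) = norm x + norm y)"

definition preserves_parallel :: "('a::real_normed_vector \<Rightarrow> 'a) \<Rightarrow> bool" where
  "preserves_parallel T \<longleftrightarrow> (\<forall>x y. parallel x y \<longrightarrow> parallel (T x) (T y))"

end

(*
  Let G be the set of extreme points of the dual unit ball. When the space is
  finite-dimensional and polyhedral, G is finite, every x is normed by some g in G,
  Ext J(x) = {g in G. g x = ||x||} for x ~= 0, and x, y are parallel iff some g in G
  norms x and satisfies |g y| = ||y||.

  For g in G, a generic point x of the open cone on which g is the only norming
  functional in G is such that T x, too, is normed by a single h in G. Every p with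
  g p = ||p|| is parallel to x, so T p is parallel to T x and |h (T p)| = ||T p||;
  convexity of the face of g removes the absolute value. This gives a map ext_map on
  G with g p = ||p|| ==> ext_map g (T p) = ||T p||. Exposed points of G and
  surjectivity of T make ext_map onto, hence a bijection of the finite set G, and a
  limit argument gives the converse implication. So ext_map maps Ext J(z) onto
  Ext J(T z); both sets have the same size, and the hypothesis relating sizes to
  orders of smoothness excludes either order of smoothness being larger.
*)

theory Submission
  imports Defs
begin

section \<open>Coordinates and compactness in finite dimension\<close>

lemma finite_family_convergent_subseq:
  fixes c :: "'i \<Rightarrow> nat \<Rightarrow> real"
  assumes "finite I" "\<And>i. i \<in> I \<Longrightarrow> bounded (range (c i))"
  obtains r where "strict_mono r" "\<And>i. i \<in> I \<Longrightarrow> convergent (c i \<circ> r)"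
proof -
  have "\<exists>r. strict_mono r \<and> (\<forall>i\<in>I. convergent (c i \<circ> r))"
    using assms
  proof (induction I rule: finite_induct)
    case empty
    show ?case using strict_mono_id by blast
  next
    case (insert j I)
    obtain r where r: "strict_mono r" "\<forall>i\<in>I. convergent (c i \<circ> r)"
      using insert.IH insert.prems by blast
    have "bounded (range (c j \<circ> r))"
      by (rule bounded_subset[OF insert.prems[of j]]) auto
    then obtain r' l where r': "strict_mono r'" "(c j \<circ> r \<circ> r') \<longlonglongrightarrow> l"
      using bounded_imp_convergent_subsequence by blast
    have "convergent (c i \<circ> (r \<circ> r'))" if "i \<in> insert j I" for i
    proof (cases "i = j")
      case True
      then show ?thesis using r'(2) by (auto simp: convergent_def o_assoc)
    next
      case False
      then have "convergent (c i \<circ> r)" using that r(2) by auto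
      then show ?thesis using convergent_subseq_convergent[OF _ r'(1)] by (simp add: o_assoc)
    qed
    then show ?case using r(1) r'(1) strict_mono_o by blast
  qed
  then show thesis using that by blast
qed

lemma convergent_subseq_coordinates:
  fixes l :: "'i \<Rightarrow> 'v::real_normed_vector \<Rightarrow> real" and f :: "nat \<Rightarrow> 'v"
  assumes I: "finite I" and rep: "\<And>v. v = (\<Sum>i\<in>I. l i v *\<^sub>R e i)"
    and bnd: "\<And>i. i \<in> I \<Longrightarrow> bounded (range (\<lambda>n. l i (f n)))"
  obtains r L where "strict_mono r" "\<And>i. i \<in> I \<Longrightarrow> (\<lambda>n. l i (f (r n))) \<longlonglongrightarrow> L i"
    "(f \<circ> r) \<longlonglongrightarrow> (\<Sum>i\<in>I. L i *\<^sub>R e i)"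
proof -
  obtain r where r: "strict_mono r" "\<And>i. i \<in> I \<Longrightarrow> convergent ((\<lambda>n. l i (f n)) \<circ> r)"
    using finite_family_convergent_subseq[OF I, of "\<lambda>i n. l i (f n)"] bnd by blast
  define L where "L i = lim ((\<lambda>n. l i (f n)) \<circ> r)" for i
  have L: "(\<lambda>n. l i (f (r n))) \<longlonglongrightarrow> L i" if "i \<in> I" for i
    using r(2)[OF that] by (simp add: L_def convergent_LIMSEQ_iff o_def)
  have "(\<lambda>n. \<Sum>i\<in>I. l i (f (r n)) *\<^sub>R e i) \<longlonglongrightarrow> (\<Sum>i\<in>I. L i *\<^sub>R e i)"
    by (intro tendsto_intros L)
  then have "(f \<circ> r) \<longlonglongrightarrow> (\<Sum>i\<in>I. L i *\<^sub>R e i)"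
    by (simp add: o_def rep[symmetric])
  with r(1) L that show thesis by blast
qed

lemma compact_if_coordinates_bounded:
  fixes S :: "'v::real_normed_vector set" and l :: "'i \<Rightarrow> 'v \<Rightarrow> real"
  assumes I: "finite I" and rep: "\<And>v. v = (\<Sum>i\<in>I. l i v *\<^sub>R e i)"
    and bnd: "\<And>i v. i \<in> I \<Longrightarrow> \<bar>l i v\<bar> \<le> M * norm v"
    and S: "bounded S" "closed S"
  shows "compact S"
  unfolding compact_eq_seq_compact_metric seq_compact_def
proof (intro allI impI)
  fix f :: "nat \<Rightarrow> 'v" assume f: "\<forall>n. f n \<in> S"
  obtain K where K: "\<And>x. x \<in> S \<Longrightarrow> norm x \<le> K" using S(1) bounded_iff by blast
  have bounded_coords: "bounded (range (\<lambda>n. l i (f n)))" if "i \<in> I" for i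
  proof -
    have "\<bar>l i (f n)\<bar> \<le> \<bar>M\<bar> * K" for n
    proof -
      have "\<bar>l i (f n)\<bar> \<le> \<bar>M\<bar> * norm (f n)"
        using bnd[OF that, of "f n"] mult_right_mono[OF abs_ge_self[of M] norm_ge_zero[of "f n"]]
        by linarith
      also have "\<dots> \<le> \<bar>M\<bar> * K" using K f by (simp add: mult_left_mono)
      finally show ?thesis .
    qed
    then show ?thesis by (auto simp: bounded_iff)
  qed
  then obtain r L where r: "strict_mono r" "(f \<circ> r) \<longlonglongrightarrow> (\<Sum>i\<in>I. L i *\<^sub>R e i)"
    using convergent_subseq_coordinates[OF I rep bounded_coords] by blast
  moreover have "(\<Sum>i\<in>I. L i *\<^sub>R e i) \<in> S"
    using closed_sequentially[OF S(2) _ r(2)] f by auto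
  ultimately show "\<exists>l\<in>S. \<exists>r. strict_mono r \<and> (f \<circ> r) \<longlonglongrightarrow> l" by blast
qed

lemma coordinate_unit_sequence_not_null:
  fixes B :: "'a::real_normed_vector set" and W :: "nat \<Rightarrow> 'a"
  assumes B: "finite B" "independent B" "span B = UNIV"
    and unit: "\<And>n. (\<Sum>b\<in>B. \<bar>representation B (W n) b\<bar>) = 1"
  shows "\<not> W \<longlonglongrightarrow> 0"
proof
  assume W0: "W \<longlonglongrightarrow> 0"
  have rep: "v = (\<Sum>b\<in>B. representation B v b *\<^sub>R b)" for v
    using sum_representation_eq[OF B(2) _ B(1) order_refl] B(3) by simp
  have "bounded (range (\<lambda>n. representation B (W n) b))" if "b \<in> B" for b
  proof -
    have "\<bar>representation B (W n) b\<bar> \<le> 1" for n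
      using member_le_sum[of b B "\<lambda>b. \<bar>representation B (W n) b\<bar>"] that B(1) unit[of n] by simp
    then show ?thesis by (auto simp: bounded_iff)
  qed
  then obtain r L where r: "strict_mono r"
    "\<And>b. b \<in> B \<Longrightarrow> (\<lambda>n. representation B (W (r n)) b) \<longlonglongrightarrow> L b"
    "(W \<circ> r) \<longlonglongrightarrow> (\<Sum>b\<in>B. L b *\<^sub>R b)"
    using convergent_subseq_coordinates[OF B(1) rep, of W] by blast
  have "(W \<circ> r) \<longlonglongrightarrow> 0" using LIMSEQ_subseq_LIMSEQ[OF W0 r(1)] .
  then have "(\<Sum>b\<in>B. L b *\<^sub>R b) = 0" using r(3) LIMSEQ_unique by blast
  then have "L b = 0" if "b \<in> B" for b
    using independentD[OF B(2) B(1) order_refl _ that] by blast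
  then have "(\<lambda>n. \<Sum>b\<in>B. \<bar>representation B (W (r n)) b\<bar>) \<longlonglongrightarrow> (\<Sum>b\<in>B. \<bar>0\<bar>)"
    by (intro tendsto_sum tendsto_rabs) (use r(2) in auto)
  then show False using unit LIMSEQ_const_iff[of "1::real" 0] by simp
qed

lemma sum_abs_representation_le_norm:
  fixes B :: "'a::real_normed_vector set"
  assumes B: "finite B" "independent B" "span B = UNIV"
  obtains m where "m > 0" "\<And>v. m * (\<Sum>b\<in>B. \<bar>representation B v b\<bar>) \<le> norm v"
proof -
  define \<sigma> where "\<sigma> v = (\<Sum>b\<in>B. \<bar>representation B v b\<bar>)" for v
  have \<sigma>_scale: "\<sigma> (t *\<^sub>R v) = \<bar>t\<bar> * \<sigma> v" for t v
    using representation_scale[OF B(2)] B(3) by (simp add: \<sigma>_def abs_mult sum_distrib_left)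
  have "\<exists>m>0. \<forall>v. m * \<sigma> v \<le> norm v"
  proof (rule ccontr)
    assume no_bound: "\<not> ?thesis"
    have "\<exists>v. norm v < \<sigma> v / Suc n" for n
    proof -
      have "\<not> (\<forall>v. (1 / Suc n) * \<sigma> v \<le> norm v)"
        using no_bound by (metis of_nat_0_less_iff zero_less_Suc zero_less_divide_1_iff)
      then show ?thesis by (auto simp: not_le)
    qed
    then obtain V where V: "\<And>n. norm (V n) < \<sigma> (V n) / Suc n" by metis
    have \<sigma>V: "\<sigma> (V n) > 0" for n
      using le_less_trans[OF norm_ge_zero V[of n]] by (simp add: zero_less_divide_iff)
    define W where "W n = (1 / \<sigma> (V n)) *\<^sub>R V n" for n
    have "\<sigma> (W n) = 1" for n
      using \<sigma>V[of n] by (simp add: W_def \<sigma>_scale)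
    moreover have "norm (W n) < 1 / Suc n" for n
      using V[of n] \<sigma>V[of n] by (simp add: W_def field_simps)
    then have "W \<longlonglongrightarrow> 0" by (rule LIMSEQ_norm_0)
    ultimately show False using coordinate_unit_sequence_not_null[OF B] by (simp add: \<sigma>_def)
  qed
  then show thesis using that by (auto simp: \<sigma>_def)
qed

context
  assumes fin_dim: "fin_dim_space TYPE('a::real_normed_vector)"
begin

lemma fin_dim_coordinates:
  obtains B :: "'a set" and M where "finite B"
    "\<And>v. v = (\<Sum>b\<in>B. representation B v b *\<^sub>R b)"
    "\<And>b v. b \<in> B \<Longrightarrow> \<bar>representation B v b\<bar> \<le> M * norm v"
    "\<And>b. b \<in> B \<Longrightarrow> bounded_linear (\<lambda>v. representation B v b)"
proof -
  obtain B0 :: "'a set" where B0: "finite B0" "span B0 = UNIV"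
    using fin_dim unfolding fin_dim_space_def by blast
  obtain B where B: "B \<subseteq> B0" "independent B" "B0 \<subseteq> span B"
    using maximal_independent_subset[of B0] by blast
  have span: "span B = UNIV"
    using B0(2) span_minimal[OF B(3) subspace_span] by blast
  have fin: "finite B" using finite_subset[OF B(1) B0(1)] .
  obtain m where m: "m > 0" "\<And>v. m * (\<Sum>b\<in>B. \<bar>representation B v b\<bar>) \<le> norm v"
    using sum_abs_representation_le_norm[OF fin B(2) span] by blast
  have M: "\<bar>representation B v b\<bar> \<le> (1 / m) * norm v" if "b \<in> B" for b v
  proof -
    have "m * \<bar>representation B v b\<bar> \<le> m * (\<Sum>b\<in>B. \<bar>representation B v b\<bar>)"
      using m(1) member_le_sum[of b B "\<lambda>b. \<bar>representation B v b\<bar>"] that fin by simp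
    then show ?thesis using m by (simp add: pos_le_divide_eq mult.commute order_trans)
  qed
  have "bounded_linear (\<lambda>v. representation B v b)" if "b \<in> B" for b
  proof (rule bounded_linear_intro)
    show "representation B (u + v) b = representation B u b + representation B v b" for u v
      using representation_add[OF B(2)] span by simp
    show "representation B (c *\<^sub>R v) b = c *\<^sub>R representation B v b" for c v
      using representation_scale[OF B(2)] span by simp
    show "norm (representation B v b) \<le> norm v * (1 / m)" for v
      using M[OF that, of v] by (simp add: mult.commute)
  qed
  moreover have "v = (\<Sum>b\<in>B. representation B v b *\<^sub>R b)" for v
    using sum_representation_eq[OF B(2) _ fin order_refl] span by simp
  ultimately show thesis using that fin M by blast
qed

lemma fin_dim_compact:
  fixes S :: "'a set"
  assumes "bounded S" "closed S"
  shows "compact S"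
proof -
  obtain B :: "'a set" and M where B: "finite B"
    "\<And>v. v = (\<Sum>b\<in>B. representation B v b *\<^sub>R b)"
    "\<And>b v. b \<in> B \<Longrightarrow> \<bar>representation B v b\<bar> \<le> M * norm v"
    "\<And>b. b \<in> B \<Longrightarrow> bounded_linear (\<lambda>v. representation B v b)"
    using fin_dim_coordinates by metis
  show ?thesis by (rule compact_if_coordinates_bounded[OF B(1) B(2) B(3) assms])
qed

lemma fin_dim_compact_dual:
  fixes S :: "('a \<Rightarrow>\<^sub>L real) set"
  assumes "bounded S" "closed S"
  shows "compact S"
proof -
  obtain B :: "'a set" and M where B: "finite B"
    "\<And>v. v = (\<Sum>b\<in>B. representation B v b *\<^sub>R b)"
    "\<And>b v. b \<in> B \<Longrightarrow> \<bar>representation B v b\<bar> \<le> M * norm v"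
    "\<And>b. b \<in> B \<Longrightarrow> bounded_linear (\<lambda>v. representation B v b)"
    using fin_dim_coordinates by metis
  define e where "e b = Blinfun (\<lambda>v. representation B v b)" for b
  have rep: "f = (\<Sum>b\<in>B. f b *\<^sub>R e b)" for f :: "'a \<Rightarrow>\<^sub>L real"
  proof (rule blinfun_eqI)
    fix v
    have "f v = f (\<Sum>b\<in>B. representation B v b *\<^sub>R b)" by (rule arg_cong[OF B(2)])
    also have "\<dots> = (\<Sum>b\<in>B. f b * representation B v b)"
      by (simp add: blinfun.sum_right blinfun.scaleR_right mult.commute)
    also have "\<dots> = (\<Sum>b\<in>B. (f b *\<^sub>R e b) v)"
      by (intro sum.cong refl) (simp add: e_def blinfun.scaleR_left bounded_linear_Blinfun_apply B(4))
    also have "\<dots> = (\<Sum>b\<in>B. f b *\<^sub>R e b) v"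
      by (simp add: blinfun.sum_left)
    finally show "f v = (\<Sum>b\<in>B. f b *\<^sub>R e b) v" .
  qed
  have eval_bound: "\<bar>f b\<bar> \<le> (\<Sum>c\<in>B. norm c) * norm f" if "b \<in> B" for b and f :: "'a \<Rightarrow>\<^sub>L real"
  proof -
    have "\<bar>f b\<bar> \<le> norm f * norm b" using norm_blinfun[of f b] by simp
    also have "\<dots> \<le> norm f * (\<Sum>c\<in>B. norm c)"
      using that B(1) by (intro mult_left_mono member_le_sum) auto
    finally show ?thesis by (simp add: mult.commute)
  qed
  show ?thesis by (rule compact_if_coordinates_bounded[OF B(1) rep eval_bound assms])
qed

end

section \<open>Hahn-Banach extension\<close>

lemma linear_functional_vanishing_on_subspace:
  fixes S :: "'a::real_vector set"
  assumes S: "subspace S" and v: "v \<notin> S"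
  obtains \<phi> :: "'a \<Rightarrow> real" where "linear \<phi>" "\<phi> v = 1" "\<And>u. u \<in> S \<Longrightarrow> \<phi> u = 0"
proof -
  obtain C where C: "C \<subseteq> S" "independent C" "S \<subseteq> span C"
    using maximal_independent_subset[of S] by blast
  have span_C: "span C = S" using C span_minimal[OF C(1) S] by blast
  have "independent (insert v C)" using independent_insertI[OF _ C(2)] span_C v by blast
  then obtain \<phi> :: "'a \<Rightarrow> real"
    where \<phi>: "linear \<phi>" "\<forall>x\<in>insert v C. \<phi> x = (if x = v then 1 else 0)"
    using linear_independent_extend[of "insert v C" "\<lambda>x. if x = v then 1 else 0"] by blast
  have "\<phi> u = 0" if "u \<in> S" for u
  proof -
    have "\<phi> c = 0" if "c \<in> C" for c using \<phi>(2) that C(1) v by auto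
    then show ?thesis
      using linear_eq_on_span[OF \<phi>(1) module_hom_zero, of C u] that span_C by auto
  qed
  then show thesis using that \<phi> by simp
qed

lemma hahn_banach_line_bound:
  fixes g :: "'a::real_normed_vector \<Rightarrow> real"
  assumes g: "linear g" and S: "subspace S" and u: "u \<in> S"
    and dom: "\<And>u. u \<in> S \<Longrightarrow> g u \<le> norm u"
    and c_lower: "\<And>u. u \<in> S \<Longrightarrow> g u - norm (u - v) \<le> c"
    and c_upper: "\<And>w. w \<in> S \<Longrightarrow> c \<le> norm (w + v) - g w"
  shows "g u + k * c \<le> norm (u + k *\<^sub>R v)"
proof -
  consider "k = 0" | "k > 0" | "k < 0" by linarith
  then show ?thesis
  proof cases
    case 1
    then show ?thesis using dom[OF u] by simp
  next
    case 2
    have "k * c \<le> k * (norm ((1 / k) *\<^sub>R u + v) - g ((1 / k) *\<^sub>R u))"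
      using c_upper[OF subspace_scale[OF S u]] 2 by (simp add: mult_left_mono)
    also have "\<dots> = norm (k *\<^sub>R ((1 / k) *\<^sub>R u + v)) - g u"
      using 2 by (simp add: linear_scale[OF g] right_diff_distrib)
    also have "k *\<^sub>R ((1 / k) *\<^sub>R u + v) = u + k *\<^sub>R v" using 2 by (simp add: scaleR_add_right)
    finally show ?thesis by simp
  next
    case 3
    define s where "s = - k"
    have s: "s > 0" using 3 by (simp add: s_def)
    have "s * (g ((1 / s) *\<^sub>R u) - norm ((1 / s) *\<^sub>R u - v)) \<le> s * c"
      using mult_left_mono[OF c_lower[OF subspace_scale[OF S u]], of s] s by simp
    moreover have "s * (g ((1 / s) *\<^sub>R u) - norm ((1 / s) *\<^sub>R u - v))
        = g u - norm (s *\<^sub>R ((1 / s) *\<^sub>R u - v))"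
      using s by (simp add: linear_scale[OF g] right_diff_distrib)
    moreover have "s *\<^sub>R ((1 / s) *\<^sub>R u - v) = u + k *\<^sub>R v" using s by (simp add: s_def scaleR_diff_right)
    ultimately have "g u - norm (u + k *\<^sub>R v) \<le> s * c" by simp
    then show ?thesis by (simp add: s_def)
  qed
qed

lemma hahn_banach_step:
  fixes g :: "'a::real_normed_vector \<Rightarrow> real"
  assumes g: "linear g" and S: "subspace S" and v: "v \<notin> S"
    and dom: "\<And>u. u \<in> S \<Longrightarrow> g u \<le> norm u"
  obtains g' where "linear g'" "\<And>u. u \<in> S \<Longrightarrow> g' u = g u"
    "\<And>x. x \<in> span (insert v S) \<Longrightarrow> g' x \<le> norm x"
proof -
  have gap: "g u - norm (u - v) \<le> norm (w + v) - g w" if "u \<in> S" "w \<in> S" for u w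
  proof -
    have "g u + g w = g (u + w)" using linear_add[OF g] by simp
    also have "\<dots> \<le> norm (u + w)" using dom subspace_add[OF S that] by blast
    also have "\<dots> \<le> norm (u - v) + norm (w + v)" using norm_triangle_ineq[of "u - v" "w + v"] by simp
    finally show ?thesis by simp
  qed
  \<comment> \<open>the value of the extension at \<open>v\<close>; any number between the two sides of \<open>gap\<close> would do\<close>
  define c where "c = (SUP u\<in>S. g u - norm (u - v))"
  have bdd: "bdd_above ((\<lambda>u. g u - norm (u - v)) ` S)"
    using gap[OF _ subspace_0[OF S]] by (meson bdd_aboveI2)
  have c_lower: "g u - norm (u - v) \<le> c" if "u \<in> S" for u
    unfolding c_def using cSUP_upper[OF that bdd] .
  have c_upper: "c \<le> norm (w + v) - g w" if "w \<in> S" for w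
    unfolding c_def using subspace_0[OF S] gap[OF _ that] by (intro cSUP_least) auto
  obtain \<phi> :: "'a \<Rightarrow> real" where \<phi>: "linear \<phi>" "\<phi> v = 1" "\<And>u. u \<in> S \<Longrightarrow> \<phi> u = 0"
    using linear_functional_vanishing_on_subspace[OF S v] by blast
  define g' where "g' x = g x + (c - g v) * \<phi> x" for x
  have "linear g'"
    unfolding g'_def using g \<phi>(1)
    by (intro linearI) (simp_all add: linear_add linear_scale algebra_simps)
  moreover have "g' u = g u" if "u \<in> S" for u using \<phi>(3)[OF that] by (simp add: g'_def)
  moreover have "g' x \<le> norm x" if x: "x \<in> span (insert v S)" for x
  proof -
    obtain k where "x - k *\<^sub>R v \<in> S"
      using x span_breakdown_eq[of x v S] unfolding span_eq_iff[THEN iffD2, OF S] by blast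
    then obtain u where u: "u \<in> S" "x = u + k *\<^sub>R v" by (metis diff_add_cancel)
    have "g' x = g u + k * c"
      using u \<phi> g by (simp add: g'_def linear_add linear_scale algebra_simps)
    then show ?thesis
      using hahn_banach_line_bound[OF g S u(1) dom c_lower c_upper] u(2) by simp
  qed
  ultimately show thesis using that by blast
qed

lemma hahn_banach_finite:
  fixes g :: "'a::real_normed_vector \<Rightarrow> real"
  assumes A: "finite A" and g: "linear g" and S: "subspace S"
    and dom: "\<And>u. u \<in> S \<Longrightarrow> g u \<le> norm u"
  obtains g' where "linear g'" "\<And>u. u \<in> S \<Longrightarrow> g' u = g u"
    "\<And>x. x \<in> span (S \<union> A) \<Longrightarrow> g' x \<le> norm x"
proof -
  have "\<exists>g'. linear g' \<and> (\<forall>u\<in>S. g' u = g u) \<and> (\<forall>x\<in>span (S \<union> A). g' x \<le> norm x)"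
    using A
  proof (induction A rule: finite_induct)
    case empty
    show ?case
      using g dom unfolding Un_empty_right span_eq_iff[THEN iffD2, OF S] by blast
  next
    case (insert a A)
    then obtain g' where g': "linear g'" "\<forall>u\<in>S. g' u = g u" "\<forall>x\<in>span (S \<union> A). g' x \<le> norm x"
      by blast
    show ?case
    proof (cases "a \<in> span (S \<union> A)")
      case True
      then have "span (S \<union> insert a A) = span (S \<union> A)" by (metis Un_insert_right span_redundant)
      then show ?thesis using g' by auto
    next
      case False
      obtain g'' where g'': "linear g''" "\<And>u. u \<in> span (S \<union> A) \<Longrightarrow> g'' u = g' u"
        "\<And>x. x \<in> span (insert a (span (S \<union> A))) \<Longrightarrow> g'' x \<le> norm x"
        using hahn_banach_step[OF g'(1) subspace_span False] g'(3) by blast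
      have "span (insert a (span (S \<union> A))) = span (S \<union> insert a A)"
        by (simp add: span_insert span_span)
      then show ?thesis using g'' g'(2) span_superset[of "S \<union> A"] by (intro exI[of _ g'']) auto
    qed
  qed
  then show thesis using that by blast
qed

context
  assumes fin_dim: "fin_dim_space TYPE('a::real_normed_vector)"
begin

lemma hahn_banach_fin_dim:
  fixes x :: 'a
  obtains f :: "'a \<Rightarrow>\<^sub>L real" where "norm f \<le> 1" "f x = norm x"
proof (cases "x = 0")
  case True
  then show thesis using that[of 0] by simp
next
  case False
  obtain \<phi> :: "'a \<Rightarrow> real" where \<phi>: "linear \<phi>" "\<phi> x = 1"
    using linear_functional_vanishing_on_subspace[of "{0}" x] False by auto
  have lin: "linear (\<lambda>y. norm x * \<phi> y)" using linear_compose_scale_right[OF \<phi>(1)] by simp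
  have "norm x * \<phi> y \<le> norm y" if y: "y \<in> span {x}" for y
  proof -
    obtain t where "y = t *\<^sub>R x" using y by (auto simp: span_singleton)
    then show ?thesis
      using \<phi> mult_right_mono[OF abs_ge_self norm_ge_zero] by (simp add: linear_scale mult.commute)
  qed
  moreover obtain B :: "'a set" where B: "finite B" "span B = UNIV"
    using fin_dim unfolding fin_dim_space_def by blast
  ultimately obtain g where g: "linear g" "\<And>u. u \<in> span {x} \<Longrightarrow> g u = norm x * \<phi> u"
    "\<And>y. y \<in> span (span {x} \<union> B) \<Longrightarrow> g y \<le> norm y"
    using hahn_banach_finite[OF B(1) lin subspace_span] by blast
  have "span (span {x} \<union> B) = UNIV" using B(2) span_mono[of B "span {x} \<union> B"] by auto
  then have g_le: "g y \<le> norm y" for y using g(3) by blast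
  have "\<bar>g y\<bar> \<le> norm y" for y
    using g_le[of y] g_le[of "- y"] linear_neg[OF g(1)] by (simp add: abs_le_iff)
  then have "bounded_linear g"
    using g(1) by (intro bounded_linear_intro[of _ 1]) (auto simp: linear_add linear_scale)
  moreover have "g x = norm x" using g(2)[of x] \<phi>(2) by (simp add: span_base)
  ultimately show thesis
    using that[of "Blinfun g"] \<open>\<And>y. \<bar>g y\<bar> \<le> norm y\<close>
    by (simp add: bounded_linear_Blinfun_apply norm_blinfun_bound)
qed

end

section \<open>Extreme points\<close>

lemma extreme_point_of_symmetric_pair:
  fixes p h :: "'v::real_vector"
  assumes "p extreme_point_of S" "p - h \<in> S" "p + h \<in> S"
  shows "h = 0"
proof (rule ccontr)
  assume "h \<noteq> 0"
  have "(p + h) - (p - h) = 2 *\<^sub>R h" by (simp add: scaleR_2)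
  then have "p - h \<noteq> p + h" using \<open>h \<noteq> 0\<close> by force
  moreover have "midpoint (p - h) (p + h) = p"
    by (simp add: midpoint_def scaleR_add_right[symmetric])
  ultimately have "p \<in> open_segment (p - h) (p + h)"
    using midpoint_in_open_segment by metis
  then show False using assms unfolding extreme_point_of_def by blast
qed

lemma face_of_linear_max:
  fixes K :: "'v::real_vector set" and f :: "'v \<Rightarrow> real"
  assumes f: "linear f" and K: "convex K" and le: "\<And>y. y \<in> K \<Longrightarrow> f y \<le> m"
  shows "{y \<in> K. f y = m} face_of K"
  unfolding face_of_def
proof (intro conjI)
  have "{y \<in> K. f y = m} = K \<inter> f -` {m}" by auto
  then show "convex {y \<in> K. f y = m}"
    using convex_Int[OF K convex_linear_vimage[OF f convex_singleton]] by simp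
  show "\<forall>a\<in>K. \<forall>b\<in>K. \<forall>x\<in>{y \<in> K. f y = m}. x \<in> open_segment a b \<longrightarrow>
      a \<in> {y \<in> K. f y = m} \<and> b \<in> {y \<in> K. f y = m}"
  proof (intro ballI impI)
    fix a b x assume ab: "a \<in> K" "b \<in> K" and x: "x \<in> {y \<in> K. f y = m}" "x \<in> open_segment a b"
    then obtain u where u: "0 < u" "u < 1" "x = (1 - u) *\<^sub>R a + u *\<^sub>R b"
      by (auto simp: in_segment)
    have "(1 - u) * f a + u * f b = m" using x(1) u(3) f by (simp add: linear_add linear_scale)
    then have sum0: "(1 - u) * (m - f a) + u * (m - f b) = 0" by (simp add: algebra_simps)
    have "(1 - u) * (m - f a) \<ge> 0" "u * (m - f b) \<ge> 0" using le ab u(1,2) by simp_all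
    then have "(1 - u) * (m - f a) = 0" "u * (m - f b) = 0" using sum0 by linarith+
    then show "a \<in> {y \<in> K. f y = m} \<and> b \<in> {y \<in> K. f y = m}" using ab u(1,2) by simp
  qed
qed auto

definition finite_separating :: "('v::real_normed_vector \<Rightarrow> real) set \<Rightarrow> bool" where
  "finite_separating L \<longleftrightarrow>
     finite L \<and> (\<forall>l\<in>L. bounded_linear l) \<and> (\<forall>a b. (\<forall>l\<in>L. l a = l b) \<longrightarrow> a = b)"

lemma extreme_point_exists:
  fixes K :: "'v::real_normed_vector set" and L :: "('v \<Rightarrow> real) set"
  assumes K: "compact K" "K \<noteq> {}" and L: "finite_separating L"
  obtains p where "p extreme_point_of K"
proof -
  have L_fin: "finite L" and L_lin: "\<And>l. l \<in> L \<Longrightarrow> bounded_linear l"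
    and L_sep: "\<And>a b. \<forall>l\<in>L. l a = l b \<Longrightarrow> a = b"
    using L unfolding finite_separating_def by blast+
  \<comment> \<open>a maximiser of this strictly convex function lies on no open segment of \<open>K\<close>\<close>
  define \<phi> where "\<phi> y = (\<Sum>l\<in>L. (l y)\<^sup>2)" for y
  have "continuous_on K \<phi>"
    unfolding \<phi>_def by (intro continuous_intros linear_continuous_on L_lin)
  then obtain p where p: "p \<in> K" "\<And>y. y \<in> K \<Longrightarrow> \<phi> y \<le> \<phi> p"
    using continuous_attains_sup[OF K] by blast
  have "p extreme_point_of K"
    unfolding extreme_point_of_def
  proof (intro conjI p(1) ballI notI)
    fix a b assume ab: "a \<in> K" "b \<in> K" "p \<in> open_segment a b"
    then obtain u where u: "0 < u" "u < 1" "p = (1 - u) *\<^sub>R a + u *\<^sub>R b" "a \<noteq> b"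
      by (auto simp: in_segment)
    have "(l p)\<^sup>2 = (1 - u) * (l a)\<^sup>2 + u * (l b)\<^sup>2 - u * (1 - u) * (l a - l b)\<^sup>2" if "l \<in> L" for l
    proof -
      have lp: "l p = (1 - u) * l a + u * l b"
        using u(3) bounded_linear.linear[OF L_lin[OF that]] by (simp add: linear_add linear_scale)
      show ?thesis unfolding lp power2_eq_square by (simp add: algebra_simps)
    qed
    then have \<phi>p: "\<phi> p = (1 - u) * \<phi> a + u * \<phi> b - u * (1 - u) * (\<Sum>l\<in>L. (l a - l b)\<^sup>2)"
      by (simp add: \<phi>_def sum.distrib sum_subtractf sum_distrib_left)
    obtain l where "l \<in> L" "l a \<noteq> l b" using L_sep u(4) by blast
    then have "(\<Sum>l\<in>L. (l a - l b)\<^sup>2) > 0" using L_fin by (intro sum_pos2) auto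
    then have "\<phi> p < (1 - u) * \<phi> a + u * \<phi> b" using u(1,2) \<phi>p by simp
    also have "\<dots> \<le> (1 - u) * \<phi> p + u * \<phi> p"
      using u(1,2) p(2)[OF ab(1)] p(2)[OF ab(2)] by (intro add_mono mult_left_mono) auto
    finally show False by (simp add: algebra_simps)
  qed
  then show thesis using that by blast
qed

lemma extreme_point_maximizing:
  fixes K :: "'v::real_normed_vector set" and L :: "('v \<Rightarrow> real) set" and f :: "'v \<Rightarrow> real"
  assumes K: "compact K" "convex K" "K \<noteq> {}" and L: "finite_separating L"
    and f: "bounded_linear f"
  obtains p where "p extreme_point_of K" "\<And>y. y \<in> K \<Longrightarrow> f y \<le> f p"
proof -
  obtain q where q: "q \<in> K" "\<And>y. y \<in> K \<Longrightarrow> f y \<le> f q"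
    using continuous_attains_sup[OF K(1,3) linear_continuous_on[OF f]] by blast
  let ?F = "{y \<in> K. f y = f q}"
  have face: "?F face_of K"
    using face_of_linear_max[OF bounded_linear.linear[OF f] K(2)] q(2) by blast
  have "closed {y. f y = f q}"
    by (intro closed_Collect_eq linear_continuous_on f continuous_on_const)
  moreover have "?F = K \<inter> {y. f y = f q}" by auto
  ultimately have "compact ?F" using compact_Int_closed[OF K(1)] by simp
  then obtain p where "p extreme_point_of ?F"
    using extreme_point_exists[OF _ _ L] q(1) by blast
  then have "p extreme_point_of K" "f p = f q" using extreme_point_of_face[OF face] by auto
  then show thesis using that q(2) by simp
qed

context
  assumes fin_dim: "fin_dim_space TYPE('a::real_normed_vector)"
begin

lemma fin_dim_finite_separating: "\<exists>L :: ('a \<Rightarrow> real) set. finite_separating L"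
proof -
  obtain B :: "'a set" and M where B: "finite B"
    "\<And>v. v = (\<Sum>b\<in>B. representation B v b *\<^sub>R b)"
    "\<And>b v. b \<in> B \<Longrightarrow> \<bar>representation B v b\<bar> \<le> M * norm v"
    "\<And>b. b \<in> B \<Longrightarrow> bounded_linear (\<lambda>v. representation B v b)"
    using fin_dim_coordinates[OF fin_dim] by metis
  have "u = v" if "\<forall>b\<in>B. representation B u b = representation B v b" for u v
  proof -
    have "(\<Sum>b\<in>B. representation B u b *\<^sub>R b) = (\<Sum>b\<in>B. representation B v b *\<^sub>R b)"
      using that by simp
    with B(2)[of u] B(2)[of v] show ?thesis by argo
  qed
  then have "finite_separating ((\<lambda>b v. representation B v b) ` B)"
    unfolding finite_separating_def using B(1,4) by auto
  then show ?thesis by blast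
qed

lemma fin_dim_finite_separating_dual: "\<exists>L :: (('a \<Rightarrow>\<^sub>L real) \<Rightarrow> real) set. finite_separating L"
proof -
  obtain B :: "'a set" and M where B: "finite B"
    "\<And>v. v = (\<Sum>b\<in>B. representation B v b *\<^sub>R b)"
    "\<And>b v. b \<in> B \<Longrightarrow> \<bar>representation B v b\<bar> \<le> M * norm v"
    "\<And>b. b \<in> B \<Longrightarrow> bounded_linear (\<lambda>v. representation B v b)"
    using fin_dim_coordinates[OF fin_dim] by metis
  have "f = g" if "\<forall>b\<in>B. f b = g b" for f g :: "'a \<Rightarrow>\<^sub>L real"
  proof (rule blinfun_eqI)
    fix v
    have "h v = (\<Sum>b\<in>B. representation B v b * h b)" for h :: "'a \<Rightarrow>\<^sub>L real"
      using arg_cong[OF B(2), of h v] by (simp add: blinfun.sum_right blinfun.scaleR_right)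
    then show "f v = g v" using that by simp
  qed
  then have "finite_separating ((\<lambda>b f. blinfun_apply f b) ` B)"
    unfolding finite_separating_def using B(1) by auto
  then show ?thesis by blast
qed

end

section \<open>Extreme points of the dual unit ball\<close>

definition ext_ball :: "'v::real_normed_vector set" where
  "ext_ball = {x. x extreme_point_of cball 0 1}"

definition ext_norming :: "'a::real_normed_vector \<Rightarrow> ('a \<Rightarrow>\<^sub>L real) set" where
  "ext_norming x = {g \<in> (ext_ball :: ('a \<Rightarrow>\<^sub>L real) set). g x = norm x}"

lemma ext_ball_norm_le: "x \<in> ext_ball \<Longrightarrow> norm x \<le> 1"
  by (simp add: ext_ball_def extreme_point_of_def)

lemma abs_blinfun_le_norm:
  fixes g :: "'a::real_normed_vector \<Rightarrow>\<^sub>L real"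
  assumes "norm g \<le> 1"
  shows "\<bar>g y\<bar> \<le> norm y"
proof -
  have "\<bar>g y\<bar> \<le> norm g * norm y" using norm_blinfun[of g y] by simp
  also have "\<dots> \<le> norm y" using assms by (simp add: mult_left_le_one_le)
  finally show ?thesis .
qed

lemma ext_ball_dual_abs_le:
  fixes g :: "'a::real_normed_vector \<Rightarrow>\<^sub>L real"
  shows "g \<in> ext_ball \<Longrightarrow> \<bar>g y\<bar> \<le> norm y"
  by (rule abs_blinfun_le_norm[OF ext_ball_norm_le])

lemma ExtJ_eq_ext_norming:
  fixes x :: "'a::real_normed_vector"
  assumes "x \<noteq> 0"
  shows "ExtJ x = ext_norming x"
proof -
  have norm_eq_1: "norm f = 1" if "norm f \<le> 1" "f x = norm x" for f :: "'a \<Rightarrow>\<^sub>L real"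
  proof -
    have "norm x \<le> norm f * norm x" using norm_blinfun[of f x] that(2) by simp
    then have "1 \<le> norm f" using assms by (simp add: mult_le_cancel_right1)
    then show ?thesis using that(1) by simp
  qed
  have J: "J x = {f \<in> cball 0 1. blinfun_apply f x = norm x}"
    unfolding J_def by (auto dest: norm_eq_1)
  have "blinfun_apply f x \<le> norm x" if "f \<in> cball 0 1" for f :: "'a \<Rightarrow>\<^sub>L real"
    using abs_blinfun_le_norm[of f x] that by simp
  then have face: "{f \<in> cball 0 1. blinfun_apply f x = norm x} face_of (cball 0 1 :: ('a \<Rightarrow>\<^sub>L real) set)"
    by (intro face_of_linear_max bounded_linear.linear[OF blinfun.bounded_linear_left] convex_cball)
  have "g \<in> ExtJ x \<longleftrightarrow> g \<in> ext_norming x" for g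
  proof -
    have "g extreme_point_of cball 0 1 \<Longrightarrow> g \<in> cball 0 1"
      by (simp add: extreme_point_of_def)
    then show ?thesis
      unfolding ExtJ_def ext_norming_def ext_ball_def J mem_Collect_eq
      using extreme_point_of_face[OF face, of g] by blast
  qed
  then show ?thesis by blast
qed

context
  assumes fin_dim: "fin_dim_space TYPE('a::real_normed_vector)"
begin

lemma ext_ball_maximizing:
  fixes f :: "'a \<Rightarrow>\<^sub>L real"
  obtains d where "d \<in> ext_ball" "\<And>y. y \<in> cball 0 1 \<Longrightarrow> f y \<le> f d"
proof -
  obtain L :: "('a \<Rightarrow> real) set" where L: "finite_separating L"
    using fin_dim_finite_separating[OF fin_dim] by blast
  have "compact (cball (0::'a) 1)" "cball (0::'a) 1 \<noteq> {}"
    using fin_dim_compact[OF fin_dim bounded_cball closed_cball] by auto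
  then obtain d where "d extreme_point_of cball 0 1" "\<And>y. y \<in> cball 0 1 \<Longrightarrow> f y \<le> f d"
    using extreme_point_maximizing[OF _ convex_cball _ L blinfun.bounded_linear_right] by blast
  then show thesis using that unfolding ext_ball_def by blast
qed

lemma ext_norming_nonempty:
  fixes x :: 'a
  shows "ext_norming x \<noteq> {}"
proof -
  obtain L :: "(('a \<Rightarrow>\<^sub>L real) \<Rightarrow> real) set" where L: "finite_separating L"
    using fin_dim_finite_separating_dual[OF fin_dim] by blast
  have "compact (cball (0 :: 'a \<Rightarrow>\<^sub>L real) 1)" "cball (0 :: 'a \<Rightarrow>\<^sub>L real) 1 \<noteq> {}"
    using fin_dim_compact_dual[OF fin_dim bounded_cball closed_cball] by auto
  then obtain g :: "'a \<Rightarrow>\<^sub>L real" where g: "g extreme_point_of cball 0 1"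
    "\<And>f. f \<in> cball 0 1 \<Longrightarrow> blinfun_apply f x \<le> g x"
    using extreme_point_maximizing[OF _ convex_cball _ L blinfun.bounded_linear_left] by blast
  obtain f :: "'a \<Rightarrow>\<^sub>L real" where "norm f \<le> 1" "f x = norm x"
    using hahn_banach_fin_dim[OF fin_dim] by blast
  then have "norm x \<le> g x" using g(2)[of f] by simp
  moreover have "g x \<le> norm x"
    using ext_ball_dual_abs_le[of g x] g(1) by (simp add: ext_ball_def)
  ultimately show ?thesis using g(1) by (auto simp: ext_norming_def ext_ball_def)
qed

lemma norm_blinfun_le_1_iff:
  fixes f :: "'a \<Rightarrow>\<^sub>L real"
  shows "norm f \<le> 1 \<longleftrightarrow> (\<forall>d\<in>ext_ball. f d \<le> 1)"
proof
  assume "norm f \<le> 1"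
  then have "f d \<le> 1" if "d \<in> ext_ball" for d
    using abs_blinfun_le_norm[of f d] ext_ball_norm_le[OF that] by linarith
  then show "\<forall>d\<in>ext_ball. f d \<le> 1" by blast
next
  assume ext_le: "\<forall>d\<in>ext_ball. f d \<le> 1"
  obtain d where d: "d \<in> ext_ball" "\<And>y. y \<in> cball 0 1 \<Longrightarrow> f y \<le> f d"
    using ext_ball_maximizing by blast
  have le: "f y \<le> norm y" for y
  proof (cases "y = 0")
    case False
    have "f ((1 / norm y) *\<^sub>R y) \<le> f d" using d(2) False by simp
    then have "f ((1 / norm y) *\<^sub>R y) \<le> 1" using d(1) ext_le by fastforce
    then show ?thesis using False by (simp add: blinfun.scaleR_right field_simps)
  qed simp
  show "norm f \<le> 1"
  proof (rule norm_blinfun_bound)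
    show "norm (f y) \<le> 1 * norm y" for y
      using le[of y] le[of "- y"] by (simp add: blinfun.minus_right abs_le_iff)
  qed simp
qed

lemma parallel_iff_ext_norming:
  fixes x y :: 'a
  shows "parallel x y \<longleftrightarrow> (\<exists>g\<in>ext_norming x. \<bar>blinfun_apply g y\<bar> = norm y)"
proof
  assume "parallel x y"
  then obtain c where c: "\<bar>c\<bar> = 1" "norm (x + c *\<^sub>R y) = norm x + norm y"
    unfolding parallel_def by blast
  obtain g :: "'a \<Rightarrow>\<^sub>L real" where g: "g \<in> ext_norming (x + c *\<^sub>R y)"
    using ext_norming_nonempty by blast
  then have g_ext: "g \<in> ext_ball" by (simp add: ext_norming_def)
  have "g x \<le> norm x" "c * g y \<le> norm y"
    using ext_ball_dual_abs_le[OF g_ext, of x] ext_ball_dual_abs_le[OF g_ext, of y] c(1)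
    by (auto simp: abs_mult intro: order_trans[OF abs_ge_self])
  moreover have "g x + c * g y = norm x + norm y"
    using g c(2) by (simp add: ext_norming_def blinfun.add_right blinfun.scaleR_right)
  ultimately have "g x = norm x" "c * g y = norm y" by linarith+
  moreover from this(2) have "\<bar>g y\<bar> = norm y" using c(1) by (metis abs_mult mult_1 abs_norm_cancel)
  ultimately show "\<exists>g\<in>ext_norming x. \<bar>blinfun_apply g y\<bar> = norm y"
    using g_ext by (auto simp: ext_norming_def)
next
  assume "\<exists>g\<in>ext_norming x. \<bar>blinfun_apply g y\<bar> = norm y"
  then obtain g :: "'a \<Rightarrow>\<^sub>L real" where g: "g \<in> ext_ball" "g x = norm x" "\<bar>g y\<bar> = norm y"
    by (auto simp: ext_norming_def)
  define c :: real where "c = (if g y \<ge> 0 then 1 else -1)"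
  have c: "\<bar>c\<bar> = 1" "c * g y = norm y" using g(3) by (auto simp: c_def)
  have "norm x + norm y = g (x + c *\<^sub>R y)"
    using g(2) c(2) by (simp add: blinfun.add_right blinfun.scaleR_right)
  also have "\<dots> \<le> norm (x + c *\<^sub>R y)" using ext_ball_dual_abs_le[OF g(1)] abs_le_D1 by blast
  finally have "norm (x + c *\<^sub>R y) = norm x + norm y"
    using norm_triangle_ineq[of x "c *\<^sub>R y"] c(1) by simp
  then show "parallel x y" unfolding parallel_def using c(1) by blast
qed

lemma ext_norming_eq_singleton_iff:
  fixes g :: "'a \<Rightarrow>\<^sub>L real"
  assumes g: "g \<in> ext_ball"
  shows "ext_norming y = {g} \<longleftrightarrow> (\<forall>k\<in>ext_ball. k \<noteq> g \<longrightarrow> k y < g y)"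
proof
  assume eq: "ext_norming y = {g}"
  then have gy: "g y = norm y" by (auto simp: ext_norming_def)
  show "\<forall>k\<in>ext_ball. k \<noteq> g \<longrightarrow> k y < g y"
  proof (intro ballI impI)
    fix k :: "'a \<Rightarrow>\<^sub>L real" assume "k \<in> ext_ball" "k \<noteq> g"
    then have "k y \<le> norm y" "k y \<noteq> norm y"
      using ext_ball_dual_abs_le[of k y] eq by (auto simp: ext_norming_def)
    then show "k y < g y" using gy by simp
  qed
next
  assume less: "\<forall>k\<in>ext_ball. k \<noteq> g \<longrightarrow> k y < g y"
  obtain h where h: "h \<in> ext_norming y" using ext_norming_nonempty by blast
  have "k = g" if "k \<in> ext_norming y" for k
  proof (rule ccontr)
    assume "k \<noteq> g"
    moreover have "k \<in> ext_ball" "k y = norm y" using that by (auto simp: ext_norming_def)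
    ultimately have "norm y < g y" using less by auto
    then show False using ext_ball_dual_abs_le[OF g, of y] by simp
  qed
  then show "ext_norming y = {g}" using h by blast
qed

lemma ext_norming_singleton_if_inj:
  fixes y :: 'a
  assumes inj: "inj_on (\<lambda>k :: 'a \<Rightarrow>\<^sub>L real. k y) ext_ball"
  obtains h where "ext_norming y = {h}"
proof -
  obtain h where h: "h \<in> ext_norming y" using ext_norming_nonempty by blast
  have "k = h" if k: "k \<in> ext_norming y" for k
    using inj_onD[OF inj, of k h] k h by (simp add: ext_norming_def)
  then show thesis using that h by blast
qed

lemma ext_norming_singleton_add:
  fixes h :: "'a \<Rightarrow>\<^sub>L real"
  assumes h: "h \<in> ext_ball" "ext_norming y = {h}" and z: "h z = norm z" and s: "s > 0"
  shows "ext_norming (z + s *\<^sub>R y) = {h}"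
  unfolding ext_norming_eq_singleton_iff[OF h(1)]
proof (intro ballI impI)
  fix k :: "'a \<Rightarrow>\<^sub>L real" assume k: "k \<in> ext_ball" "k \<noteq> h"
  have "k z \<le> h z" using ext_ball_dual_abs_le[OF k(1), of z] z by simp
  moreover have "k y < h y" using h k ext_norming_eq_singleton_iff[OF h(1)] by blast
  ultimately show "k (z + s *\<^sub>R y) < h (z + s *\<^sub>R y)"
    using s by (simp add: blinfun.add_right blinfun.scaleR_right add_le_less_mono)
qed

end

context
  assumes fin_dim: "fin_dim_space TYPE('a::real_normed_vector)"
    and polyhedral: "polyhedral TYPE('a)"
begin

lemma finite_ext_ball: "finite (ext_ball :: 'a set)"
  using polyhedral by (simp add: polyhedral_def ext_ball_def)

lemma ext_dual_ball_eqI: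
  fixes f g :: "'a \<Rightarrow>\<^sub>L real"
  assumes g: "g \<in> ext_ball" and f: "\<And>d. d \<in> ext_ball \<Longrightarrow> g d = 1 \<Longrightarrow> f d = 1"
  shows "f = g"
proof (rule ccontr)
  assume "f \<noteq> g"
  define h where "h = f - g"
  have "h \<noteq> 0" using \<open>f \<noteq> g\<close> by (simp add: h_def)
  have g_le: "g d \<le> 1" if "d \<in> ext_ball" for d
    using norm_blinfun_le_1_iff[OF fin_dim] ext_ball_norm_le[OF g] that by blast
  have "\<forall>\<^sub>F s in at (0::real). \<forall>d\<in>ext_ball. g d + s * h d \<le> 1"
  proof (rule eventually_ball_finite[OF finite_ext_ball], rule ballI)
    fix d :: 'a assume d: "d \<in> ext_ball"
    show "\<forall>\<^sub>F s in at 0. g d + s * h d \<le> 1"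
    proof (cases "g d = 1")
      case True
      then have "h d = 0" using f d by (simp add: h_def blinfun.diff_left)
      then show ?thesis using True by simp
    next
      case False
      then have "g d < 1" using g_le[OF d] by simp
      moreover have "((\<lambda>s. g d + s * h d) \<longlongrightarrow> g d) (at 0)" by (auto intro!: tendsto_eq_intros)
      ultimately have "\<forall>\<^sub>F s in at 0. g d + s * h d < 1" using order_tendstoD(2) by blast
      then show ?thesis by (rule eventually_mono) simp
    qed
  qed
  then obtain \<epsilon> where \<epsilon>: "\<epsilon> > 0" "\<And>s. s \<noteq> 0 \<Longrightarrow> \<bar>s\<bar> < \<epsilon> \<Longrightarrow> \<forall>d\<in>ext_ball. g d + s * h d \<le> 1"
    unfolding eventually_at by (auto simp: dist_real_def)
  define s where "s = \<epsilon> / 2"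
  have s: "s > 0" "s < \<epsilon>" using \<epsilon>(1) by (simp_all add: s_def)
  have "norm (g + t *\<^sub>R h) \<le> 1" if "\<bar>t\<bar> = s" for t
    unfolding norm_blinfun_le_1_iff[OF fin_dim]
    using \<epsilon>(2)[of t] s that by (auto simp: blinfun.add_left blinfun.scaleR_left)
  from this[of s] this[of "- s"] s(1)
  have "g - s *\<^sub>R h \<in> cball 0 1" "g + s *\<^sub>R h \<in> cball 0 1" by simp_all
  then have "s *\<^sub>R h = 0"
    using extreme_point_of_symmetric_pair g unfolding ext_ball_def by blast
  then show False using \<open>h \<noteq> 0\<close> s(1) by simp
qed

lemma finite_ext_dual_ball: "finite (ext_ball :: ('a \<Rightarrow>\<^sub>L real) set)"
proof (rule inj_on_finite[of "\<lambda>g :: 'a \<Rightarrow>\<^sub>L real. {d \<in> ext_ball. g d = 1}" _ "Pow ext_ball"])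
  show "inj_on (\<lambda>g :: 'a \<Rightarrow>\<^sub>L real. {d \<in> ext_ball. g d = 1}) ext_ball"
  proof (rule inj_onI)
    fix g g' :: "'a \<Rightarrow>\<^sub>L real"
    assume "g \<in> ext_ball" "{d \<in> ext_ball. g d = 1} = {d \<in> ext_ball. g' d = 1}"
    then show "g = g'" using ext_dual_ball_eqI[of g g'] by blast
  qed
qed (use finite_ext_ball in auto)

lemma ext_dual_ball_exposed:
  fixes g :: "'a \<Rightarrow>\<^sub>L real"
  assumes g: "g \<in> ext_ball"
  obtains y where "\<And>k. k \<in> ext_ball \<Longrightarrow> k \<noteq> g \<Longrightarrow> k y < g y"
proof -
  define A where "A = {d \<in> ext_ball. g d = 1}"
  have A: "finite A" using finite_ext_ball by (simp add: A_def)
  have "k (\<Sum>A) < g (\<Sum>A)" if k: "k \<in> ext_ball" "k \<noteq> g" for k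
  proof -
    have "k d \<le> 1" if "d \<in> A" for d
      using norm_blinfun_le_1_iff[OF fin_dim] ext_ball_norm_le[OF k(1)] that by (auto simp: A_def)
    moreover obtain d where "d \<in> A" "k d \<noteq> 1"
      using ext_dual_ball_eqI[OF g, of k] k(2) by (auto simp: A_def)
    ultimately have "(\<Sum>d\<in>A. k d) < (\<Sum>d\<in>A. 1)"
      using A by (intro sum_strict_mono_ex1) (auto intro!: bexI[of _ d] simp: order_less_le)
    then show ?thesis by (simp add: A_def blinfun.sum_right)
  qed
  then show thesis using that by blast
qed

lemma open_ext_norming_singleton:
  fixes g :: "'a \<Rightarrow>\<^sub>L real"
  assumes g: "g \<in> ext_ball"
  shows "open {y. ext_norming y = {g}}"
proof -
  have "{y. ext_norming y = {g}} = (\<Inter>k\<in>ext_ball - {g}. {y. blinfun_apply k y < g y})"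
    using ext_norming_eq_singleton_iff[OF fin_dim g] by auto
  moreover have "open {y. k y < g y}" for k :: "'a \<Rightarrow>\<^sub>L real"
    by (intro open_Collect_less linear_continuous_on blinfun.bounded_linear_right)
  ultimately show ?thesis using finite_ext_dual_ball by (auto intro: open_INT)
qed

lemma ext_norming_singleton_exists:
  fixes g :: "'a \<Rightarrow>\<^sub>L real" and z :: 'a
  assumes g: "g \<in> ext_ball" and z: "z \<noteq> 0"
  obtains y where "y \<noteq> 0" "ext_norming y = {g}"
proof -
  obtain y where y: "\<And>k. k \<in> ext_ball \<Longrightarrow> k \<noteq> g \<Longrightarrow> k y < g y"
    using ext_dual_ball_exposed[OF g] by blast
  show thesis
  proof (cases "y = 0")
    case True
    then have "ext_ball = {g}" using y g by fastforce
    moreover obtain h where h: "h \<in> ext_norming z" using ext_norming_nonempty[OF fin_dim] by blast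
    moreover have "h \<in> ext_ball" using h by (simp add: ext_norming_def)
    ultimately have "h = g" by blast
    then have "ext_norming z = {g}" using h \<open>ext_ball = {g}\<close> by (auto simp: ext_norming_def)
    then show thesis using that z by blast
  next
    case False
    then show thesis using that y ext_norming_eq_singleton_iff[OF fin_dim g] by blast
  qed
qed

end

section \<open>Operators preserving parallel pairs\<close>

lemma finite_roots_on_line:
  fixes H :: "('v::real_vector \<Rightarrow> real) set"
  assumes "finite H" "\<And>\<eta>. \<eta> \<in> H \<Longrightarrow> linear \<eta>" "\<And>\<eta>. \<eta> \<in> H \<Longrightarrow> \<eta> x \<noteq> 0 \<or> \<eta> v \<noteq> 0"
  shows "finite {t. \<exists>\<eta>\<in>H. \<eta> (x + t *\<^sub>R v) = 0}"
proof (rule finite_subset[OF _ finite_imageI[OF assms(1), of "\<lambda>\<eta>. - \<eta> x / \<eta> v"]])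
  show "{t. \<exists>\<eta>\<in>H. \<eta> (x + t *\<^sub>R v) = 0} \<subseteq> (\<lambda>\<eta>. - \<eta> x / \<eta> v) ` H"
  proof
    fix t assume "t \<in> {t. \<exists>\<eta>\<in>H. \<eta> (x + t *\<^sub>R v) = 0}"
    then obtain \<eta> where \<eta>: "\<eta> \<in> H" "\<eta> x + t * \<eta> v = 0"
      using assms(2) by (auto simp: linear_add linear_scale)
    then have "\<eta> v \<noteq> 0" using assms(3) by force
    then have "t = - \<eta> x / \<eta> v" using \<eta>(2) by (simp add: field_simps)
    then show "t \<in> (\<lambda>\<eta>. - \<eta> x / \<eta> v) ` H" using \<eta>(1) by blast
  qed
qed

lemma open_avoids_kernels:
  fixes U :: "'v::real_normed_vector set" and H :: "('v \<Rightarrow> real) set"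
  assumes U: "open U" "U \<noteq> {}"
    and H: "finite H" "\<And>\<eta>. \<eta> \<in> H \<Longrightarrow> linear \<eta> \<and> (\<exists>v. \<eta> v \<noteq> 0)"
  obtains x where "x \<in> U" "\<And>\<eta>. \<eta> \<in> H \<Longrightarrow> \<eta> x \<noteq> 0"
proof -
  have "\<exists>x\<in>U. \<forall>\<eta>\<in>H. \<eta> x \<noteq> 0"
    using H
  proof (induction H rule: finite_induct)
    case empty
    then show ?case using U(2) by blast
  next
    case (insert \<eta>\<^sub>0 H)
    then obtain x where x: "x \<in> U" "\<forall>\<eta>\<in>H. \<eta> x \<noteq> 0" by blast
    obtain v where v: "\<eta>\<^sub>0 v \<noteq> 0" using insert.prems by blast
    have "linear \<eta>\<^sub>0" using insert.prems by blast
    then have "v \<noteq> 0" using v linear_0 by auto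
    obtain \<epsilon> where \<epsilon>: "\<epsilon> > 0" "ball x \<epsilon> \<subseteq> U" using U(1) x(1) open_contains_ball by blast
    have "infinite {0<..<\<epsilon> / norm v}" using \<epsilon>(1) \<open>v \<noteq> 0\<close> by simp
    moreover have "finite {t. \<exists>\<eta>\<in>insert \<eta>\<^sub>0 H. \<eta> (x + t *\<^sub>R v) = 0}"
      using insert.hyps(1) insert.prems x(2) v by (intro finite_roots_on_line) auto
    ultimately have "{0<..<\<epsilon> / norm v} - {t. \<exists>\<eta>\<in>insert \<eta>\<^sub>0 H. \<eta> (x + t *\<^sub>R v) = 0} \<noteq> {}"
      using Diff_infinite_finite infinite_imp_nonempty by blast
    then obtain t where "t \<in> {0<..<\<epsilon> / norm v}" "t \<notin> {t. \<exists>\<eta>\<in>insert \<eta>\<^sub>0 H. \<eta> (x + t *\<^sub>R v) = 0}"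
      by blast
    then have t: "0 < t" "t < \<epsilon> / norm v" "\<forall>\<eta>\<in>insert \<eta>\<^sub>0 H. \<eta> (x + t *\<^sub>R v) \<noteq> 0"
      by auto
    have "dist x (x + t *\<^sub>R v) = t * norm v" using t(1) by (simp add: dist_norm)
    also have "\<dots> < \<epsilon>" using t(2) \<open>v \<noteq> 0\<close> by (simp add: pos_less_divide_eq)
    finally have "x + t *\<^sub>R v \<in> U" using \<epsilon>(2) by auto
    then show ?case using t(3) by blast
  qed
  then show thesis using that by blast
qed

locale parallel_preserving_operator =
  fixes T :: "'a::real_normed_vector \<Rightarrow> 'a"
  assumes fin_dim: "fin_dim_space TYPE('a)"
    and polyhedral: "polyhedral TYPE('a)"
    and nontrivial: "\<exists>z::'a. z \<noteq> 0"
    and linear_T: "linear T"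
    and bij_T: "bij T"
    and preserves_parallel_T: "preserves_parallel T"
begin

lemma T_eq_0_iff: "T x = 0 \<longleftrightarrow> x = 0"
  using linear_0[OF linear_T] bij_is_inj[OF bij_T] by (metis injD)

lemma T_inv: "T (inv T y) = y"
  using bij_T by (simp add: bij_is_surj surj_f_inv_f)

lemma linear_blinfun_comp_T: "linear (\<lambda>y. blinfun_apply k (T y))"
  using linear_compose[OF linear_T bounded_linear.linear[OF blinfun.bounded_linear_right]]
  by (simp add: o_def)

lemma smooth_point_with_smooth_image:
  fixes g :: "'a \<Rightarrow>\<^sub>L real"
  assumes g: "g \<in> ext_ball"
  obtains x h where "x \<noteq> 0" "ext_norming x = {g}" "ext_norming (T x) = {h}"
proof -
  let ?U = "{y. ext_norming y = {g}} - {0}"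
  obtain z :: 'a where "z \<noteq> 0" using nontrivial by blast
  then obtain y where "y \<noteq> 0" "ext_norming y = {g}"
    using ext_norming_singleton_exists[OF fin_dim polyhedral g] by blast
  then have U: "open ?U" "?U \<noteq> {}"
    using open_ext_norming_singleton[OF fin_dim polyhedral g] by auto
  let ?H = "(\<lambda>(k, k') y. blinfun_apply k (T y) - blinfun_apply k' (T y)) `
    {(k, k') \<in> ext_ball \<times> ext_ball. k \<noteq> (k' :: 'a \<Rightarrow>\<^sub>L real)}"
  have "finite ((ext_ball :: ('a \<Rightarrow>\<^sub>L real) set) \<times> (ext_ball :: ('a \<Rightarrow>\<^sub>L real) set))"
    using finite_ext_dual_ball[OF fin_dim polyhedral] by (intro finite_cartesian_product)
  then have fin_H: "finite ?H" by (rule finite_imageI[OF finite_subset, rotated]) auto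
  have H: "linear \<eta> \<and> (\<exists>v. \<eta> v \<noteq> 0)" if \<eta>: "\<eta> \<in> ?H" for \<eta>
  proof -
    obtain k k' :: "'a \<Rightarrow>\<^sub>L real" where kk: "k \<noteq> k'" "\<eta> = (\<lambda>y. k (T y) - k' (T y))"
      using \<eta> by auto
    have "linear \<eta>"
      unfolding kk(2) by (rule linear_compose_sub[OF linear_blinfun_comp_T linear_blinfun_comp_T])
    moreover obtain u where "k u \<noteq> k' u" using kk(1) blinfun_eqI by blast
    then have "\<eta> (inv T u) \<noteq> 0" by (simp add: kk(2) T_inv)
    ultimately show ?thesis by blast
  qed
  obtain x where x: "x \<in> ?U" "\<And>\<eta>. \<eta> \<in> ?H \<Longrightarrow> \<eta> x \<noteq> 0"
    using open_avoids_kernels[OF U fin_H H] by blast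
  have "inj_on (\<lambda>k :: 'a \<Rightarrow>\<^sub>L real. k (T x)) ext_ball"
  proof (rule inj_onI, rule ccontr)
    fix k k' :: "'a \<Rightarrow>\<^sub>L real"
    assume k: "k \<in> ext_ball" "k' \<in> ext_ball" "k (T x) = k' (T x)" "k \<noteq> k'"
    then have "(\<lambda>y. k (T y) - k' (T y)) \<in> ?H" by (intro image_eqI[of _ _ "(k, k')"]) simp_all
    from x(2)[OF this] show False using k(3) by simp
  qed
  then obtain h where "ext_norming (T x) = {h}"
    using ext_norming_singleton_if_inj[OF fin_dim] by blast
  then show thesis using that x(1) by blast
qed

lemma norming_on_face_if_abs_norming:
  fixes g h :: "'a \<Rightarrow>\<^sub>L real"
  assumes g: "g \<in> ext_ball" and x: "x \<noteq> 0" "g x = norm x" and h: "h (T x) = norm (T x)"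
    and abs_eq: "\<And>p. g p = norm p \<Longrightarrow> \<bar>h (T p)\<bar> = norm (T p)"
    and p: "g p = norm p"
  shows "h (T p) = norm (T p)"
proof (rule ccontr)
  assume "h (T p) \<noteq> norm (T p)"
  then have neg: "h (T p) < 0" using abs_eq[OF p] by (cases "h (T p) \<ge> 0") auto
  have pos: "h (T x) > 0" using h x(1) T_eq_0_iff by simp
  \<comment> \<open>\<open>h \<circ> T\<close> changes sign on the segment from \<open>x\<close> to \<open>p\<close>, which lies in the face of \<open>g\<close>\<close>
  define s where "s = h (T x) / (h (T x) - h (T p))"
  have s: "0 < s" "s < 1" using pos neg by (simp_all add: s_def field_simps)
  define q where "q = (1 - s) *\<^sub>R x + s *\<^sub>R p"
  have gq: "g q = (1 - s) * norm x + s * norm p"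
    using x(2) p by (simp add: q_def blinfun.add_right blinfun.scaleR_right)
  moreover have "norm q \<le> (1 - s) * norm x + s * norm p"
    using norm_triangle_ineq[of "(1 - s) *\<^sub>R x" "s *\<^sub>R p"] s by (simp add: q_def)
  moreover have "g q \<le> norm q" using ext_ball_dual_abs_le[OF g, of q] by simp
  ultimately have "g q = norm q" by linarith
  have "h (T q) = (1 - s) * h (T x) + s * h (T p)"
    using linear_T by (simp add: q_def linear_add linear_scale blinfun.add_right blinfun.scaleR_right)
  also have "\<dots> = 0" using pos neg by (simp add: s_def field_simps)
  finally have "q = 0" using abs_eq[OF \<open>g q = norm q\<close>] T_eq_0_iff by simp
  moreover have "g q > 0"
    using gq s x(1) by (simp add: add_pos_nonneg)
  ultimately show False by simp
qed

lemma face_into_face: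
  fixes g :: "'a \<Rightarrow>\<^sub>L real"
  assumes g: "g \<in> ext_ball"
  obtains h :: "'a \<Rightarrow>\<^sub>L real" where "h \<in> ext_ball" "\<And>y. g y = norm y \<Longrightarrow> h (T y) = norm (T y)"
proof -
  obtain x h where x: "x \<noteq> 0" "ext_norming x = {g}" and h: "ext_norming (T x) = {h}"
    using smooth_point_with_smooth_image[OF g] by blast
  have gx: "g x = norm x" using x(2) by (auto simp: ext_norming_def)
  have hTx: "h \<in> ext_ball" "h (T x) = norm (T x)" using h by (auto simp: ext_norming_def)
  have "\<bar>h (T p)\<bar> = norm (T p)" if "g p = norm p" for p
  proof -
    have "parallel x p" using parallel_iff_ext_norming[OF fin_dim] x(2) that by auto
    then have "parallel (T x) (T p)"
      using preserves_parallel_T by (simp add: preserves_parallel_def)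
    then obtain k where "k \<in> ext_norming (T x)" "\<bar>k (T p)\<bar> = norm (T p)"
      using parallel_iff_ext_norming[OF fin_dim] by blast
    then show ?thesis using h by simp
  qed
  then show thesis using that hTx norming_on_face_if_abs_norming[OF g x(1) gx hTx(2)] by blast
qed

definition ext_map :: "('a \<Rightarrow>\<^sub>L real) \<Rightarrow> ('a \<Rightarrow>\<^sub>L real)" where
  "ext_map g = (SOME h. h \<in> ext_ball \<and> (\<forall>y. g y = norm y \<longrightarrow> blinfun_apply h (T y) = norm (T y)))"

lemma ext_map_spec:
  assumes "g \<in> ext_ball"
  shows "ext_map g \<in> ext_ball" "\<And>y. g y = norm y \<Longrightarrow> ext_map g (T y) = norm (T y)"
proof -
  have "\<exists>h. h \<in> ext_ball \<and> (\<forall>y. g y = norm y \<longrightarrow> blinfun_apply h (T y) = norm (T y))"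
    using face_into_face[OF assms] by metis
  then have "ext_map g \<in> ext_ball \<and> (\<forall>y. g y = norm y \<longrightarrow> ext_map g (T y) = norm (T y))"
    unfolding ext_map_def by (rule someI_ex)
  then show "ext_map g \<in> ext_ball" "\<And>y. g y = norm y \<Longrightarrow> ext_map g (T y) = norm (T y)" by auto
qed

lemma ext_map_ext_norming: "g \<in> ext_norming y \<Longrightarrow> ext_map g \<in> ext_norming (T y)"
  using ext_map_spec by (simp add: ext_norming_def)

lemma ext_map_image: "ext_map ` ext_ball = ext_ball"
proof
  show "ext_map ` ext_ball \<subseteq> ext_ball" using ext_map_spec by blast
  show "ext_ball \<subseteq> ext_map ` ext_ball"
  proof
    fix h :: "'a \<Rightarrow>\<^sub>L real" assume h: "h \<in> ext_ball"
    obtain y where y: "ext_norming y = {h}"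
      using nontrivial ext_norming_singleton_exists[OF fin_dim polyhedral h] by metis
    obtain g where g: "g \<in> ext_norming (inv T y)"
      using ext_norming_nonempty[OF fin_dim] by blast
    then have "ext_map g = h" using ext_map_ext_norming[OF g] y by (simp add: T_inv)
    moreover have "g \<in> ext_ball" using g by (simp add: ext_norming_def)
    ultimately show "h \<in> ext_map ` ext_ball" by blast
  qed
qed

lemma inj_on_ext_map: "inj_on ext_map ext_ball"
  using finite_surj_inj[OF finite_ext_dual_ball[OF fin_dim polyhedral]] ext_map_image by simp

lemma ext_map_reflects:
  fixes g :: "'a \<Rightarrow>\<^sub>L real"
  assumes g: "g \<in> ext_ball" and Tx: "ext_map g (T x) = norm (T x)"
  shows "g x = norm x"
proof -
  obtain y where y: "ext_norming y = {ext_map g}"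
    using nontrivial ext_norming_singleton_exists[OF fin_dim polyhedral ext_map_spec(1)[OF g]] by metis
  define v where "v = inv T y"
  \<comment> \<open>\<open>ext_map g\<close> is the only norming functional of \<open>T (x + s v)\<close>; then let \<open>s \<rightarrow> 0\<close>\<close>
  have on_face: "g (x + s *\<^sub>R v) = norm (x + s *\<^sub>R v)" if s: "s > 0" for s
  proof -
    have "T (x + s *\<^sub>R v) = T x + s *\<^sub>R y"
      using linear_T by (simp add: v_def linear_add linear_scale T_inv)
    then have Txsv: "ext_norming (T (x + s *\<^sub>R v)) = {ext_map g}"
      using ext_norming_singleton_add[OF fin_dim ext_map_spec(1)[OF g] y Tx s] by simp
    obtain g' where g': "g' \<in> ext_norming (x + s *\<^sub>R v)"
      using ext_norming_nonempty[OF fin_dim] by blast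
    then have "ext_map g' = ext_map g" using ext_map_ext_norming[OF g'] Txsv by simp
    moreover have "g' \<in> ext_ball" using g' by (simp add: ext_norming_def)
    ultimately have "g' = g" using inj_on_ext_map g by (simp add: inj_on_eq_iff)
    then show ?thesis using g' by (simp add: ext_norming_def)
  qed
  have "closed {y. g y = norm y}"
    by (intro closed_Collect_eq linear_continuous_on blinfun.bounded_linear_right continuous_on_norm_id)
  moreover have "x + inverse (real (Suc n)) *\<^sub>R v \<in> {y. g y = norm y}" for n
    using on_face by simp
  moreover have "(\<lambda>n. x + inverse (real (Suc n)) *\<^sub>R v) \<longlonglongrightarrow> x"
    using tendsto_add[OF tendsto_const tendsto_scaleR[OF LIMSEQ_inverse_real_of_nat tendsto_const]]
    by simp
  ultimately have "x \<in> {y. g y = norm y}" by (rule closed_sequentially)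
  then show ?thesis by simp
qed

lemma card_ExtJ_eq:
  assumes z: "z \<noteq> 0"
  shows "card (ExtJ (T z)) = card (ExtJ z)"
proof -
  have "ext_norming (T z) = ext_map ` ext_norming z"
  proof
    show "ext_map ` ext_norming z \<subseteq> ext_norming (T z)" using ext_map_ext_norming by blast
    show "ext_norming (T z) \<subseteq> ext_map ` ext_norming z"
    proof
      fix h :: "'a \<Rightarrow>\<^sub>L real" assume h: "h \<in> ext_norming (T z)"
      then have "h \<in> ext_map ` ext_ball" using ext_map_image by (simp add: ext_norming_def)
      then obtain g where g: "g \<in> ext_ball" "h = ext_map g" by blast
      then have "g \<in> ext_norming z" using h ext_map_reflects by (simp add: ext_norming_def)
      then show "h \<in> ext_map ` ext_norming z" using g(2) by blast
    qed
  qed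
  moreover have "inj_on ext_map (ext_norming z)"
    using inj_on_ext_map by (rule inj_on_subset) (auto simp: ext_norming_def)
  moreover have "T z \<noteq> 0" using z T_eq_0_iff by simp
  ultimately show ?thesis using z by (simp add: ExtJ_eq_ext_norming card_image)
qed

end

theorem mainTheorem19:
  fixes T :: "'a::banach \<Rightarrow> 'a"
  assumes "fin_dim_space TYPE('a)"
    and "polyhedral TYPE('a)"
    and "\<forall>(x1::'a) (x2::'a). x1 \<noteq> 0 \<longrightarrow> x2 \<noteq> 0 \<longrightarrow> smooth_order x1 > smooth_order x2
           \<longrightarrow> card (ExtJ x1) > card (ExtJ x2)"
    and "linear T" and "bij T"
    and "preserves_parallel T"
  shows "\<forall>z. z \<noteq> 0 \<longrightarrow> smooth_order (T z) = smooth_order z"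
proof (intro allI impI)
  fix z :: 'a assume z: "z \<noteq> 0"
  interpret parallel_preserving_operator T
    using parallel_preserving_operator.intro[OF assms(1,2) _ assms(4-6)] z by blast
  have "card (ExtJ (T z)) = card (ExtJ z)" using card_ExtJ_eq[OF z] .
  moreover have "T z \<noteq> 0" using z T_eq_0_iff by simp
  ultimately show "smooth_order (T z) = smooth_order z"
    using assms(3) z by (metis less_irrefl linorder_neqE_nat)
qed

end
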